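(* For every $(\zeta_1,\zeta_2,\zeta_3)\in\mathbb{R}^3$ satisfying $0<\zeta_3<\zeta_2<\zeta_1$, there exists a unique choice of $(\zeta_1,\alpha,k)\in(0,\infty)\times(0,K(k))\times(0,1)$ in the transformation $$\zeta_1=\zeta_1,\qquad \zeta_2=\zeta_1\,\mathrm{dn}(2\alpha),\qquad \zeta_3=\zeta_1\,\mathrm{cn}(2\alpha),$$ (Jacobi functions of modulus $k$), which also implies $\nu:=\sqrt{\zeta_1^2-\zeta_3^2}=\zeta_1\,\mathrm{sn}(2\alpha)$. For $\zeta_1=1$, the bounded periodic profile $\phi$ (the solution of $\phi''-2\phi^3+c\phi=b$ with $b=4\zeta_1\zeta_2\zeta_3$, $c=2(\zeta_1^2+\zeta_2^2+\zeta_3^2)$ described in the context) can be uniquely expressed by $$\phi(x)=(\mathrm{dn}(2\alpha)+\mathrm{cn}(2\alpha))\frac{1+k^2\mathrm{sn}^2(\alpha)\,\mathrm{sn}^2(\mathrm{sn}(2\alpha)x)}{1-k^2\mathrm{sn}^2(\alpha)\,\mathrm{sn}^2(\mathrm{sn}(2\alpha)x)}-1,$$ where $\alpha\in(0,K)$ and $k\in(0,1)$ are two arbitrary parameters.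
   Context: $K(k)$ is the complete elliptic integral of the first kind and $\mathrm{sn},\mathrm{cn},\mathrm{dn}$ are Jacobi elliptic functions of modulus $k$. For $0<\zeta_3<\zeta_2<\zeta_1$, the profile $\phi$ referred to is the bounded periodic solution of $\phi''-2\phi^3+c\phi=b$, $(\phi')^2=\phi^4-c\phi^2+2b\phi+2d$, with $b=4\zeta_1\zeta_2\zeta_3$, $c=2(\zeta_1^2+\zeta_2^2+\zeta_3^2)$, $d=\tfrac12(\zeta_1^4+\zeta_2^4+\zeta_3^4)-\zeta_1^2\zeta_2^2-\zeta_1^2\zeta_3^2-\zeta_2^2\zeta_3^2$, given by $$\phi(x)=\frac{2(\zeta_1+\zeta_3)(\zeta_2+\zeta_3)}{(\zeta_1+\zeta_3)-(\zeta_1-\zeta_2)\mathrm{sn}^2(\nu x)}-\zeta_1-\zeta_2-\zeta_3,$$ with $\nu=\sqrt{\zeta_1^2-\zeta_3^2}$ and modulus $k=\sqrt{(\zeta_1^2-\zeta_2^2)/(\zeta_1^2-\zeta_3^2)}$, and $\alpha\in(0,K)$ defined by $\mathrm{sn}(\alpha)=\sqrt{(\zeta_1-\zeta_3)/(\zeta_1+\zeta_2)}$. *)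

theory Defs
  imports "HOL-Analysis.Analysis"
begin

definition ellipticF :: "real \<Rightarrow> real \<Rightarrow> real" where
  "ellipticF k \<phi> =
     (if 0 \<le> \<phi> then integral {0..\<phi>} (\<lambda>\<theta>. 1 / sqrt (1 - k\<^sup>2 * (sin \<theta>)\<^sup>2))
      else - integral {\<phi>..0} (\<lambda>\<theta>. 1 / sqrt (1 - k\<^sup>2 * (sin \<theta>)\<^sup>2)))"

definition ellipticK :: "real \<Rightarrow> real" where
  "ellipticK k = ellipticF k (pi / 2)"

definition jam :: "real \<Rightarrow> real \<Rightarrow> real" where
  "jam k u = (THE \<phi>. ellipticF k \<phi> = u)"

definition jsn :: "real \<Rightarrow> real \<Rightarrow> real" where
  "jsn k u = sin (jam k u)"

definition jcn :: "real \<Rightarrow> real \<Rightarrow> real" where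
  "jcn k u = cos (jam k u)"

definition jdn :: "real \<Rightarrow> real \<Rightarrow> real" where
  "jdn k u = sqrt (1 - k\<^sup>2 * (jsn k u)\<^sup>2)"

text \<open>The bounded periodic profile phi of the context, for 0 < z3 < z2 < z1, with
  nu = sqrt(z1^2 - z3^2) and modulus sqrt((z1^2-z2^2)/(z1^2-z3^2)).\<close>
definition profile :: "real \<Rightarrow> real \<Rightarrow> real \<Rightarrow> real \<Rightarrow> real" where
  "profile z1 z2 z3 x =
     (let \<nu> = sqrt (z1\<^sup>2 - z3\<^sup>2);
          m = sqrt ((z1\<^sup>2 - z2\<^sup>2) / (z1\<^sup>2 - z3\<^sup>2))
      in 2 * (z1 + z3) * (z2 + z3) / ((z1 + z3) - (z1 - z2) * (jsn m (\<nu> * x))\<^sup>2)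
         - z1 - z2 - z3)"

end

(*
  Everything is read off the amplitude \<phi> = am(2\<alpha>): cn(2\<alpha>) = cos \<phi>,
  dn(2\<alpha>) = sqrt (1 - k^2 sin^2 \<phi>), and 0 < 2\<alpha> < 2K(k) means 0 < \<phi> < pi because
  F(pi) = 2K. So z3/z1 fixes \<phi> = arccos (z3/z1), then z2/z1 fixes k^2 = (1 - (z2/z1)^2) / sin^2 \<phi>,
  and \<alpha> = F(\<phi>, k)/2; this gives existence and uniqueness of (\<alpha>, k).

  The profile formula needs the half-argument identity dn^2(u/2) = (dn u + cn u) / (1 + cn u).
  It comes from the bisection of the amplitude
    h(\<phi>) = arctan (sin \<phi> / sqrt ((\<Delta>(\<phi>) + cos \<phi>) (1 + cos \<phi>))),   \<Delta>(\<phi>) = sqrt (1 - k^2 sin^2 \<phi>),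
  whose derivative is \<Delta>(h(\<phi>)) / (2 \<Delta>(\<phi>)), so that 2 F(h(\<phi>)) - F(\<phi>) is constant, i.e. zero.
  With k^2 sn^2(\<alpha>) = 1 - dn^2(\<alpha>) = (1 - dn 2\<alpha>) / (1 + cn 2\<alpha>), the denominator of the profile
  factors as (1 + cn 2\<alpha>)(1 - k^2 sn^2(\<alpha>) sn^2(\<nu> x)) and the formula is a rational identity.
*)
theory Submission
  imports Defs
begin

definition elliptic_delta :: "real \<Rightarrow> real \<Rightarrow> real" where
  "elliptic_delta k t = sqrt (1 - k\<^sup>2 * (sin t)\<^sup>2)"

lemma one_minus_k2_sin2_pos:
  fixes k :: real
  assumes "\<bar>k\<bar> < 1"
  shows "0 < 1 - k\<^sup>2 * (sin t)\<^sup>2"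
proof -
  have "k\<^sup>2 * (sin t)\<^sup>2 \<le> k\<^sup>2"
    by (simp add: mult_left_le abs_square_le_1)
  also have "k\<^sup>2 < 1"
    using assms by (simp add: abs_square_less_1)
  finally show ?thesis by simp
qed

lemma elliptic_delta_pos: "\<bar>k\<bar> < 1 \<Longrightarrow> 0 < elliptic_delta k t"
  using one_minus_k2_sin2_pos[of k t] by (simp add: elliptic_delta_def)

lemma elliptic_delta_le_1: "elliptic_delta k t \<le> 1"
  by (simp add: elliptic_delta_def)

lemma elliptic_delta_squared:
  "\<bar>k\<bar> < 1 \<Longrightarrow> (elliptic_delta k t)\<^sup>2 = 1 - k\<^sup>2 * (sin t)\<^sup>2"
  using one_minus_k2_sin2_pos[of k t] by (simp add: elliptic_delta_def)

lemma elliptic_delta_has_real_derivative: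
  assumes "\<bar>k\<bar> < 1"
  shows "(elliptic_delta k has_real_derivative - k\<^sup>2 * sin t * cos t / elliptic_delta k t) (at t)"
  unfolding elliptic_delta_def[abs_def]
  using one_minus_k2_sin2_pos[OF assms, of t]
  by (auto intro!: derivative_eq_intros simp: power2_eq_square field_simps)

lemma continuous_on_inverse_elliptic_delta:
  assumes "\<bar>k\<bar> < 1"
  shows "continuous_on S (\<lambda>t. 1 / elliptic_delta k t)"
proof (rule continuous_on_divide[OF continuous_on_const])
  show "continuous_on S (elliptic_delta k)"
    unfolding elliptic_delta_def[abs_def] by (intro continuous_intros)
qed (metis elliptic_delta_pos[OF assms] less_irrefl)

lemma ellipticF_eq_integral_diff:
  assumes "\<bar>k\<bar> < 1" "a \<le> 0" "a \<le> u"
  shows "ellipticF k u =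
    integral {a..u} (\<lambda>t. 1 / elliptic_delta k t) - integral {a..0} (\<lambda>t. 1 / elliptic_delta k t)"
proof -
  have int: "(\<lambda>t. 1 / elliptic_delta k t) integrable_on {x..y}" for x y
    by (intro integrable_continuous_real continuous_on_inverse_elliptic_delta assms(1))
  show ?thesis
  proof (cases "0 \<le> u")
    case True
    then show ?thesis
      using Henstock_Kurzweil_Integration.integral_combine[OF assms(2) True int]
      by (simp add: ellipticF_def elliptic_delta_def)
  next
    case False
    then show ?thesis
      using Henstock_Kurzweil_Integration.integral_combine[OF assms(3) _ int, of 0]
      by (simp add: ellipticF_def elliptic_delta_def)
  qed
qed

lemma ellipticF_has_real_derivative:
  assumes "\<bar>k\<bar> < 1"
  shows "(ellipticF k has_real_derivative 1 / elliptic_delta k x) (at x)"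
proof -
  define a where "a = - \<bar>x\<bar> - 1"
  define b where "b = \<bar>x\<bar> + 1"
  let ?I = "\<lambda>u. integral {a..u} (\<lambda>t. 1 / elliptic_delta k t)"
  have "(?I has_real_derivative 1 / elliptic_delta k x) (at x within {a..b})"
    by (rule integral_has_real_derivative)
      (auto simp: a_def b_def continuous_on_inverse_elliptic_delta[OF assms])
  then have "(?I has_real_derivative 1 / elliptic_delta k x) (at x)"
    by (simp add: at_within_Icc_at a_def b_def)
  then have "((\<lambda>u. ?I u - ?I 0) has_real_derivative 1 / elliptic_delta k x) (at x)"
    by (auto intro: derivative_eq_intros)
  then show ?thesis
    by (rule has_field_derivative_transform_within_open[where S = "{a<..<b}"])
      (auto simp: a_def b_def intro!: ellipticF_eq_integral_diff[OF assms, symmetric])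
qed

lemma ellipticF_0 [simp]: "ellipticF k 0 = 0"
  by (simp add: ellipticF_def)

lemma strict_mono_ellipticF:
  assumes "\<bar>k\<bar> < 1"
  shows "strict_mono (ellipticF k)"
proof (rule strict_monoI)
  fix x y :: real
  assume "x < y"
  then show "ellipticF k x < ellipticF k y"
  proof (rule DERIV_pos_imp_increasing)
    fix t
    show "\<exists>y. (ellipticF k has_real_derivative y) (at t) \<and> 0 < y"
      using ellipticF_has_real_derivative[OF assms] elliptic_delta_pos[OF assms] by force
  qed
qed

lemma ellipticF_minus:
  assumes k: "\<bar>k\<bar> < 1"
  shows "ellipticF k (- x) = - ellipticF k x"
proof -
  let ?G = "\<lambda>x. ellipticF k x + ellipticF k (- x)"
  have "(?G has_real_derivative 1 / elliptic_delta k x + 1 / elliptic_delta k (- x) * - 1) (at x)" for x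
    by (intro DERIV_add DERIV_chain2[OF ellipticF_has_real_derivative[OF k]]
        ellipticF_has_real_derivative[OF k] DERIV_minus DERIV_ident)
  moreover have "elliptic_delta k (- x) = elliptic_delta k x" for x
    by (simp add: elliptic_delta_def)
  ultimately have "(?G has_real_derivative 0) (at x)" for x
    by fastforce
  then have "?G x = ?G 0" by (intro DERIV_isconst_all) blast
  then show ?thesis by simp
qed

lemma ellipticF_pi:
  assumes k: "\<bar>k\<bar> < 1"
  shows "ellipticF k pi = 2 * ellipticK k"
proof -
  let ?G = "\<lambda>x. ellipticF k (pi/2 + x) + ellipticF k (pi/2 - x)"
  have "(?G has_real_derivative
      1 / elliptic_delta k (pi/2 + x) * (0 + 1) + 1 / elliptic_delta k (pi/2 - x) * (0 - 1))
      (at x)" for x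
    by (intro DERIV_add DERIV_diff DERIV_chain2[OF ellipticF_has_real_derivative[OF k]]
        DERIV_const DERIV_ident)
  moreover have "elliptic_delta k (pi/2 - x) = elliptic_delta k (pi/2 + x)" for x
    by (simp add: elliptic_delta_def sin_add sin_diff)
  ultimately have "(?G has_real_derivative 0) (at x)" for x
    by fastforce
  then have "?G (pi/2) = ?G 0" by (intro DERIV_isconst_all) blast
  then show ?thesis by (simp add: ellipticK_def)
qed

lemma ellipticF_minus_id_mono:
  assumes "\<bar>k\<bar> < 1" "x \<le> y"
  shows "ellipticF k x - x \<le> ellipticF k y - y"
proof (rule DERIV_nonneg_imp_nondecreasing[OF assms(2)])
  fix t
  have "1 \<le> 1 / elliptic_delta k t"
    using elliptic_delta_pos[OF assms(1)] elliptic_delta_le_1 by simp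
  then show "\<exists>y. ((\<lambda>t. ellipticF k t - t) has_real_derivative y) (at t) \<and> 0 \<le> y"
    using ellipticF_has_real_derivative[OF assms(1)]
    by (intro exI[of _ "1 / elliptic_delta k t - 1"]) (auto intro!: derivative_eq_intros)
qed

lemma surj_ellipticF:
  assumes "\<bar>k\<bar> < 1"
  shows "surj (ellipticF k)"
proof -
  have cont: "isCont (ellipticF k) x" for x
    using ellipticF_has_real_derivative[OF assms] DERIV_isCont by blast
  have "\<exists>x. ellipticF k x = u" for u
  proof (cases "0 \<le> u")
    case True
    then have "ellipticF k 0 \<le> u" "u \<le> ellipticF k u"
      using ellipticF_minus_id_mono[OF assms True] by auto
    then show ?thesis using IVT[of "ellipticF k" 0 u u] True cont by blast
  next
    case False
    then have "ellipticF k u \<le> u" "u \<le> ellipticF k 0"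
      using ellipticF_minus_id_mono[OF assms, of u 0] by auto
    then show ?thesis using IVT[of "ellipticF k" u u 0] False cont by auto
  qed
  then show ?thesis by (metis surjI)
qed

lemma jam_ellipticF [simp]: "\<bar>k\<bar> < 1 \<Longrightarrow> jam k (ellipticF k x) = x"
  unfolding jam_def using strict_mono_ellipticF strict_mono_eq by blast

lemma ellipticF_jam [simp]: "\<bar>k\<bar> < 1 \<Longrightarrow> ellipticF k (jam k u) = u"
  using surj_ellipticF by (metis jam_ellipticF surjD)

lemma jam_bounds:
  assumes "\<bar>k\<bar> < 1" "\<bar>u\<bar> < 2 * ellipticK k"
  shows "- pi < jam k u" "jam k u < pi"
  using assms strict_mono_less[OF strict_mono_ellipticF[OF assms(1)], of "- pi" "jam k u"]
    strict_mono_less[OF strict_mono_ellipticF[OF assms(1)], of "jam k u" pi]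
  by (auto simp: ellipticF_minus ellipticF_pi)

lemma jam_pos: "\<bar>k\<bar> < 1 \<Longrightarrow> 0 < u \<Longrightarrow> 0 < jam k u"
  using strict_mono_less[OF strict_mono_ellipticF, of k 0 "jam k u"] by simp

definition half_amplitude :: "real \<Rightarrow> real \<Rightarrow> real" where
  "half_amplitude k t = arctan (sin t / sqrt ((elliptic_delta k t + cos t) * (1 + cos t)))"

lemma elliptic_delta_plus_cos_pos:
  assumes k: "\<bar>k\<bar> < 1" and "- 1 < cos t"
  shows "0 < elliptic_delta k t + cos t"
proof (cases "0 \<le> cos t")
  case True
  then show ?thesis using elliptic_delta_pos[OF k, of t] by linarith
next
  case False
  then have "(cos t)\<^sup>2 < 1"
    using assms(2) by (simp add: abs_square_less_1)
  then have "0 < (sin t)\<^sup>2"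
    using sin_cos_squared_add[of t] by linarith
  then have "k\<^sup>2 * (sin t)\<^sup>2 < (sin t)\<^sup>2"
    using k by (simp add: abs_square_less_1)
  then have "(cos t)\<^sup>2 < (elliptic_delta k t)\<^sup>2"
    using elliptic_delta_squared[OF k, of t] sin_cos_squared_add[of t] by linarith
  then have "\<bar>cos t\<bar> < elliptic_delta k t"
    using elliptic_delta_pos[OF k, of t]
    by (metis abs_of_pos power2_abs power_less_imp_less_base less_imp_le)
  then show ?thesis by linarith
qed

lemma elliptic_delta_half_amplitude_squared:
  assumes k: "\<bar>k\<bar> < 1" and c: "- 1 < cos t"
  shows "(elliptic_delta k (half_amplitude k t))\<^sup>2 = (elliptic_delta k t + cos t) / (1 + cos t)"
proof -
  define s c d where "s = sin t" and "c = cos t" and "d = elliptic_delta k t"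
  define P where "P = (d + c) * (1 + c)"
  have "0 < 1 + c" "0 < 1 + d" "0 < d + c"
    using c elliptic_delta_pos[OF k, of t] elliptic_delta_plus_cos_pos[OF k c]
    by (auto simp: c_def d_def)
  then have P: "0 < P" by (simp add: P_def)
  have sc: "s\<^sup>2 + c\<^sup>2 = 1" and dd: "d\<^sup>2 = 1 - k\<^sup>2 * s\<^sup>2"
    by (simp_all add: s_def c_def d_def elliptic_delta_squared[OF k])
  have "(sin (arctan y))\<^sup>2 = y\<^sup>2 / (1 + y\<^sup>2)" for y
    by (simp add: sin_arctan power_divide add_pos_nonneg)
  then have "(sin (half_amplitude k t))\<^sup>2 = (s / sqrt P)\<^sup>2 / (1 + (s / sqrt P)\<^sup>2)"
    by (simp add: half_amplitude_def s_def c_def d_def P_def)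
  also have "\<dots> = s\<^sup>2 / (P + s\<^sup>2)"
    using P by (simp add: power_divide field_simps add_pos_nonneg)
  also have "P + s\<^sup>2 = (1 + c) * (1 + d)"
    using sc by (simp add: P_def algebra_simps power2_eq_square)
  finally have "k\<^sup>2 * (sin (half_amplitude k t))\<^sup>2 = (1 - d) * (1 + d) / ((1 + c) * (1 + d))"
    using dd by (simp add: algebra_simps power2_eq_square)
  also have "\<dots> = (1 - d) / (1 + c)"
    using \<open>0 < 1 + d\<close> by simp
  finally show ?thesis
    using \<open>0 < 1 + c\<close>
    by (simp add: elliptic_delta_squared[OF k] c_def d_def field_simps)
qed

lemma elliptic_delta_half_amplitude:
  assumes k: "\<bar>k\<bar> < 1" and c: "- 1 < cos t"
  shows "elliptic_delta k (half_amplitude k t) =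
    sqrt ((elliptic_delta k t + cos t) * (1 + cos t)) / (1 + cos t)"
proof -
  have "0 < 1 + cos t" using c by simp
  then have "(elliptic_delta k (half_amplitude k t))\<^sup>2 =
      (sqrt ((elliptic_delta k t + cos t) * (1 + cos t)) / (1 + cos t))\<^sup>2"
    using elliptic_delta_half_amplitude_squared[OF k c] elliptic_delta_plus_cos_pos[OF k c]
    by (simp add: power_divide power2_eq_square)
  moreover have "0 \<le> sqrt ((elliptic_delta k t + cos t) * (1 + cos t)) / (1 + cos t)"
    using \<open>0 < 1 + cos t\<close> elliptic_delta_plus_cos_pos[OF k c] by simp
  ultimately show ?thesis
    using power2_eq_imp_eq less_imp_le[OF elliptic_delta_pos[OF k]] by blast
qed

text \<open>The left-hand side is the chain-rule derivative of \<open>arctan (s / q)\<close>, where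
  \<open>s = sin t\<close>, \<open>c = cos t\<close>, \<open>d = elliptic_delta k t\<close>, \<open>q\<^sup>2 = (d + c) * (1 + c)\<close>
  and \<open>P'\<close> is the derivative of \<open>(d + c) * (1 + c)\<close>.\<close>

lemma half_amplitude_derivative_simplifies:
  fixes s c d k q P' :: real
  assumes sc: "s\<^sup>2 + c\<^sup>2 = 1" and dd: "d\<^sup>2 = 1 - k\<^sup>2 * s\<^sup>2"
    and pos: "0 < d" "0 < 1 + c" "0 < 1 + d" "0 < q" and q: "q\<^sup>2 = (d + c) * (1 + c)"
    and P': "P' = (- k\<^sup>2 * s * c / d - s) * (1 + c) + (d + c) * - s"
  shows "inverse (1 + (s / q)\<^sup>2) * ((c * q - s * (inverse q / 2 * P')) / (q * q))
      = q / ((1 + c) * (2 * d))"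
proof -
  define P where "P = q\<^sup>2"
  have "0 < P" using pos by (simp add: P_def)
  have "P' * d = (- (k\<^sup>2 * s * c) - s * d) * (1 + c) - (d + c) * s * d"
    using pos by (simp add: P' field_simps)
  then have key: "(2 * c * P - s * P') * d = P * (1 + d)"
    using sc dd unfolding P_def q by algebra
  have "P + s\<^sup>2 = (1 + c) * (1 + d)"
    using sc q by (simp add: P_def algebra_simps power2_eq_square)
  then have "inverse (1 + (s / q)\<^sup>2) = P / ((1 + c) * (1 + d))"
    using \<open>0 < P\<close> by (simp add: P_def power_divide field_simps)
  moreover have "(c * q - s * (inverse q / 2 * P')) / (q * q) = (2 * c * P - s * P') / (2 * q * P)"
    using pos by (simp add: P_def field_simps power2_eq_square)
  ultimately have "inverse (1 + (s / q)\<^sup>2) * ((c * q - s * (inverse q / 2 * P')) / (q * q))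
      = (2 * c * P - s * P') * d / (2 * q * ((1 + c) * (1 + d)) * d)"
    using \<open>0 < P\<close> pos by simp
  also have "\<dots> = P * (1 + d) / (2 * q * ((1 + c) * (1 + d)) * d)"
    unfolding key ..
  also have "\<dots> = q / ((1 + c) * (2 * d))"
  proof -
    have nz: "2 * q * ((1 + c) * (1 + d)) * d \<noteq> 0" "(1 + c) * (2 * d) \<noteq> 0"
      using pos by auto
    show ?thesis
      unfolding frac_eq_eq[OF nz] P_def by (simp add: power2_eq_square algebra_simps)
  qed
  finally show ?thesis .
qed

lemma half_amplitude_has_real_derivative:
  assumes k: "\<bar>k\<bar> < 1" and c: "- 1 < cos t"
  shows "(half_amplitude k has_real_derivative
            elliptic_delta k (half_amplitude k t) / (2 * elliptic_delta k t)) (at t)"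
proof -
  define s c d where "s = sin t" and "c = cos t" and "d = elliptic_delta k t"
  define q where "q = sqrt ((d + c) * (1 + c))"
  define P' where "P' = (- k\<^sup>2 * s * c / d - s) * (1 + c) + (d + c) * - s"
  have pos: "0 < d" "0 < 1 + c" "0 < 1 + d" "0 < d + c"
    using c elliptic_delta_pos[OF k, of t] elliptic_delta_plus_cos_pos[OF k c]
    by (auto simp: c_def d_def)
  then have q: "0 < q" "q\<^sup>2 = (d + c) * (1 + c)" by (simp_all add: q_def)
  have "((\<lambda>t. (elliptic_delta k t + cos t) * (1 + cos t)) has_real_derivative P') (at t)"
    unfolding P'_def s_def c_def d_def
    by (auto intro!: derivative_eq_intros elliptic_delta_has_real_derivative[OF k])
  then have "(half_amplitude k has_real_derivative
      inverse (1 + (s / q)\<^sup>2) * ((c * q - s * (inverse q / 2 * P')) / (q * q))) (at t)"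
    unfolding half_amplitude_def[abs_def] s_def c_def q_def d_def
    by (intro DERIV_chain2[OF DERIV_arctan] DERIV_divide DERIV_sin DERIV_chain2[OF DERIV_real_sqrt])
      (use pos q(1) in \<open>auto simp: c_def d_def q_def\<close>)
  moreover have "elliptic_delta k (half_amplitude k t) = q / (1 + c)"
    using elliptic_delta_half_amplitude[OF k c] by (simp add: q_def c_def d_def)
  moreover have "s\<^sup>2 + c\<^sup>2 = 1" "d\<^sup>2 = 1 - k\<^sup>2 * s\<^sup>2"
    by (simp_all add: s_def c_def d_def elliptic_delta_squared[OF k])
  ultimately show ?thesis
    using half_amplitude_derivative_simplifies[OF _ _ pos(1-3) q P'_def] by (simp add: d_def)
qed

lemma cos_gt_minus_one: "- pi < x \<Longrightarrow> x < pi \<Longrightarrow> - 1 < cos x"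
  using cos_monotone_0_pi[of "\<bar>x\<bar>" pi] by (simp add: abs_less_iff)

lemma ellipticF_half_amplitude:
  assumes k: "\<bar>k\<bar> < 1" and t: "- pi < t" "t < pi"
  shows "ellipticF k (half_amplitude k t) = ellipticF k t / 2"
proof -
  let ?G = "\<lambda>t. 2 * ellipticF k (half_amplitude k t) - ellipticF k t"
  have "(?G has_real_derivative 0) (at x)" if "x \<in> {- pi<..<pi}" for x
  proof -
    have "- 1 < cos x"
      using that cos_gt_minus_one by simp
    then have "(?G has_real_derivative
        2 * (1 / elliptic_delta k (half_amplitude k x) *
          (elliptic_delta k (half_amplitude k x) / (2 * elliptic_delta k x)))
        - 1 / elliptic_delta k x) (at x)"
      by (intro DERIV_diff DERIV_cmult ellipticF_has_real_derivative[OF k]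
          DERIV_chain2[OF ellipticF_has_real_derivative[OF k] half_amplitude_has_real_derivative[OF k]])
    then show ?thesis
      using elliptic_delta_pos[OF k, of "half_amplitude k x"] by simp
  qed
  then have "?G t = ?G 0"
    by (intro DERIV_isconst3[of "- pi" pi]) (use t in auto)
  then show ?thesis
    by (simp add: half_amplitude_def)
qed

lemma jdn_eq_elliptic_delta: "jdn k u = elliptic_delta k (jam k u)"
  by (simp add: jdn_def jsn_def elliptic_delta_def)

lemma jsn_squared_plus_jcn_squared [simp]: "(jsn k u)\<^sup>2 + (jcn k u)\<^sup>2 = 1"
  by (simp add: jsn_def jcn_def)

lemma jdn_squared: "\<bar>k\<bar> < 1 \<Longrightarrow> (jdn k u)\<^sup>2 = 1 - k\<^sup>2 * (jsn k u)\<^sup>2"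
  by (simp add: jdn_eq_elliptic_delta elliptic_delta_squared jsn_def)

lemma jam_half:
  assumes k: "\<bar>k\<bar> < 1" and u: "\<bar>u\<bar> < 2 * ellipticK k"
  shows "jam k (u / 2) = half_amplitude k (jam k u)"
proof -
  have "ellipticF k (half_amplitude k (jam k u)) = u / 2"
    using ellipticF_half_amplitude[OF k jam_bounds[OF k u]] ellipticF_jam[OF k] by simp
  then show ?thesis
    by (metis jam_ellipticF[OF k])
qed

lemma jdn_half_squared:
  assumes k: "\<bar>k\<bar> < 1" and u: "\<bar>u\<bar> < 2 * ellipticK k"
  shows "(jdn k (u / 2))\<^sup>2 = (jdn k u + jcn k u) / (1 + jcn k u)"
proof -
  have "- 1 < cos (jam k u)"
    using jam_bounds[OF k u] by (rule cos_gt_minus_one)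
  then show ?thesis
    by (simp add: jam_half[OF k u] jdn_eq_elliptic_delta jcn_def
        elliptic_delta_half_amplitude_squared[OF k])
qed

lemma jam_eq_arccos_jcn:
  assumes k: "\<bar>k\<bar> < 1" and u: "0 < u" "u < 2 * ellipticK k"
  shows "jam k u = arccos (jcn k u)"
  using jam_pos[OF k u(1)] jam_bounds(2)[OF k, of u] u by (simp add: jcn_def arccos_cos)

lemma jsn_pos:
  assumes k: "\<bar>k\<bar> < 1" and u: "0 < u" "u < 2 * ellipticK k"
  shows "0 < jsn k u"
  using jam_pos[OF k u(1)] jam_bounds(2)[OF k, of u] u by (simp add: jsn_def sin_gt_zero)

lemma jdn_jcn_double_explicit:
  fixes c d :: real
  assumes "0 < c" "c < d" "d < 1"
  defines "k \<equiv> sqrt ((1 - d\<^sup>2) / (1 - c\<^sup>2))"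
  defines "\<alpha> \<equiv> ellipticF k (arccos c) / 2"
  shows "0 < k \<and> k < 1 \<and> 0 < \<alpha> \<and> \<alpha> < ellipticK k \<and>
    d = jdn k (2 * \<alpha>) \<and> c = jcn k (2 * \<alpha>)"
proof -
  have "c\<^sup>2 < d\<^sup>2" "d\<^sup>2 < 1"
    using assms by (auto intro: power_strict_mono simp: power_less_one_iff)
  then have ratio: "0 < (1 - d\<^sup>2) / (1 - c\<^sup>2)" "(1 - d\<^sup>2) / (1 - c\<^sup>2) < 1"
    by (auto simp: field_simps)
  then have k: "0 < k" "k < 1" "\<bar>k\<bar> < 1"
    by (auto simp: k_def)
  have \<sigma>: "0 < arccos c" "arccos c < pi" "(sin (arccos c))\<^sup>2 = 1 - c\<^sup>2"
    using assms arccos_lt_bounded[of c] \<open>c\<^sup>2 < d\<^sup>2\<close> \<open>d\<^sup>2 < 1\<close>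
    by (auto simp: sin_arccos)
  have "jam k (2 * \<alpha>) = arccos c"
    using k by (simp add: \<alpha>_def)
  moreover have "0 < \<alpha>" "\<alpha> < ellipticK k"
    using \<sigma>(1,2) strict_mono_less[OF strict_mono_ellipticF[OF k(3)], of 0 "arccos c"]
      strict_mono_less[OF strict_mono_ellipticF[OF k(3)], of "arccos c" pi]
    by (auto simp: \<alpha>_def ellipticF_pi[OF k(3)])
  moreover have "1 - k\<^sup>2 * (sin (arccos c))\<^sup>2 = d\<^sup>2"
    using ratio \<open>c\<^sup>2 < d\<^sup>2\<close> \<open>d\<^sup>2 < 1\<close> unfolding k_def \<sigma>(3) by (simp add: field_simps)
  ultimately show ?thesis
    using k assms by (simp add: jdn_def jsn_def jcn_def real_sqrt_unique)
qed

lemma jdn_jcn_double_inverse: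
  fixes c d k \<alpha> :: real
  assumes "0 < k" "k < 1" "0 < \<alpha>" "\<alpha> < ellipticK k"
    and "0 < c" "c < 1" and d: "d = jdn k (2 * \<alpha>)" and c: "c = jcn k (2 * \<alpha>)"
  shows "k = sqrt ((1 - d\<^sup>2) / (1 - c\<^sup>2)) \<and> \<alpha> = ellipticF k (arccos c) / 2"
proof -
  have k: "\<bar>k\<bar> < 1" using assms by simp
  have jam: "jam k (2 * \<alpha>) = arccos c"
    using jam_eq_arccos_jcn[OF k, of "2 * \<alpha>"] assms by simp
  have "1 - c\<^sup>2 \<noteq> 0"
    using assms by (simp add: abs_square_eq_1)
  moreover have "(jsn k (2 * \<alpha>))\<^sup>2 = 1 - c\<^sup>2"
    using jsn_squared_plus_jcn_squared[of k "2 * \<alpha>"] c by (simp add: eq_diff_eq)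
  then have "1 - k\<^sup>2 * (1 - c\<^sup>2) = d\<^sup>2"
    using jdn_squared[OF k, of "2 * \<alpha>"] d by simp
  ultimately have "k\<^sup>2 = (1 - d\<^sup>2) / (1 - c\<^sup>2)"
    by (simp add: field_simps)
  then have "k = sqrt ((1 - d\<^sup>2) / (1 - c\<^sup>2))"
    using assms(1) by (intro real_sqrt_unique[symmetric]) auto
  moreover have "\<alpha> = ellipticF k (arccos c) / 2"
    using ellipticF_jam[OF k, of "2 * \<alpha>"] jam by simp
  ultimately show ?thesis ..
qed

lemma ex1_jdn_jcn_double:
  fixes c d :: real
  assumes "0 < c" "c < d" "d < 1"
  shows "\<exists>!(\<alpha>, k). 0 < k \<and> k < 1 \<and> 0 < \<alpha> \<and> \<alpha> < ellipticK k \<and>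
           d = jdn k (2 * \<alpha>) \<and> c = jcn k (2 * \<alpha>)"
proof -
  define k where "k = sqrt ((1 - d\<^sup>2) / (1 - c\<^sup>2))"
  define \<alpha> where "\<alpha> = ellipticF k (arccos c) / 2"
  show ?thesis
  proof (rule ex1I[of _ "(\<alpha>, k)"])
    show "case (\<alpha>, k) of (\<alpha>, k) \<Rightarrow>
        0 < k \<and> k < 1 \<and> 0 < \<alpha> \<and> \<alpha> < ellipticK k \<and> d = jdn k (2 * \<alpha>) \<and> c = jcn k (2 * \<alpha>)"
      using jdn_jcn_double_explicit[OF assms] by (simp add: k_def \<alpha>_def)
  qed (use assms jdn_jcn_double_inverse in \<open>auto simp: k_def \<alpha>_def\<close>)
qed

lemma sqrt_square_minus_jcn_square:
  assumes "0 \<le> z" "\<bar>k\<bar> < 1" "0 < u" "u < 2 * ellipticK k"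
  shows "sqrt (z\<^sup>2 - (z * jcn k u)\<^sup>2) = z * jsn k u"
proof -
  have "z\<^sup>2 - (z * jcn k u)\<^sup>2 = (z * jsn k u)\<^sup>2"
    using jsn_squared_plus_jcn_squared[of k u]
    by (simp add: power_mult_distrib algebra_simps flip: distrib_left)
  then show ?thesis
    using assms jsn_pos[OF assms(2-4)] by simp
qed

lemma profile_jacobi_form:
  fixes k \<alpha> x :: real
  assumes k: "0 \<le> k" "k < 1" and \<alpha>: "0 < \<alpha>" "\<alpha> < ellipticK k"
  defines "c \<equiv> jcn k (2 * \<alpha>)" and "d \<equiv> jdn k (2 * \<alpha>)"
  defines "Y \<equiv> (jsn k (jsn k (2 * \<alpha>) * x))\<^sup>2"
  shows "profile 1 d c x =
    (d + c) * (1 + k\<^sup>2 * (jsn k \<alpha>)\<^sup>2 * Y) / (1 - k\<^sup>2 * (jsn k \<alpha>)\<^sup>2 * Y) - 1"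
proof -
  have k': "\<bar>k\<bar> < 1" using k by simp
  have u: "\<bar>2 * \<alpha>\<bar> < 2 * ellipticK k" "0 < 2 * \<alpha>" "2 * \<alpha> < 2 * ellipticK k"
    using \<alpha> by auto
  define s where "s = jsn k (2 * \<alpha>)"
  have "0 < s" using jsn_pos[OF k' u(2,3)] by (simp add: s_def)
  have sc: "s\<^sup>2 + c\<^sup>2 = 1" and dd: "d\<^sup>2 = 1 - k\<^sup>2 * s\<^sup>2"
    by (simp_all add: s_def c_def d_def jdn_squared[OF k'])
  have "0 < d + c" "- 1 < c"
    using elliptic_delta_plus_cos_pos[OF k'] cos_gt_minus_one jam_bounds[OF k' u(1)]
    by (simp_all add: c_def d_def jdn_eq_elliptic_delta jcn_def)
  have s2: "1 - c\<^sup>2 = s\<^sup>2"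
    using sc by simp
  have modulus: "sqrt ((1 - d\<^sup>2) / (1 - c\<^sup>2)) = k"
    using \<open>0 < s\<close> k by (simp add: s2 dd)
  have wavenumber: "sqrt (1 - c\<^sup>2) = s"
    using \<open>0 < s\<close> by (simp add: s2)
  define q where "q = k\<^sup>2 * (jsn k \<alpha>)\<^sup>2"
  have q: "1 - q = (d + c) / (1 + c)"
    using jdn_half_squared[OF k' u(1)] jdn_squared[OF k', of \<alpha>]
    by (simp add: q_def c_def d_def)
  have "0 < (d + c) / (1 + c)"
    using \<open>0 < d + c\<close> \<open>- 1 < c\<close> by simp
  then have "q < 1"
    using q by linarith
  have "1 - d = (1 + c) * q"
    using q \<open>- 1 < c\<close> by (simp add: field_simps)
  have "0 \<le> Y" "Y \<le> 1"
    by (simp_all add: Y_def jsn_def abs_square_le_1)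
  then have "q * Y \<le> q"
    by (simp add: q_def mult_left_le)
  then have "q * Y < 1"
    using \<open>q < 1\<close> by linarith
  have "profile 1 d c x = 2 * (1 + c) * (d + c) / ((1 + c) - (1 - d) * Y) - 1 - d - c"
    by (simp add: profile_def modulus wavenumber Y_def s_def)
  also have "\<dots> = (1 + c) * (2 * (d + c)) / ((1 + c) * (1 - q * Y)) - 1 - d - c"
    by (simp add: \<open>1 - d = (1 + c) * q\<close> algebra_simps)
  also have "\<dots> = 2 * (d + c) / (1 - q * Y) - (1 + d + c)"
    using \<open>- 1 < c\<close> by (subst nonzero_mult_divide_mult_cancel_left) auto
  also have "\<dots> = (d + c) * (1 + q * Y) / (1 - q * Y) - 1"
    using \<open>q * Y < 1\<close> by (simp add: field_simps)
  finally show ?thesis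
    by (simp add: q_def)
qed

theorem corollary1:
  shows "(\<forall>z1 z2 z3 :: real. 0 < z3 \<and> z3 < z2 \<and> z2 < z1 \<longrightarrow>
            (\<exists>!(\<alpha>, k). 0 < k \<and> k < 1 \<and> 0 < \<alpha> \<and> \<alpha> < ellipticK k \<and>
                 z2 = z1 * jdn k (2 * \<alpha>) \<and> z3 = z1 * jcn k (2 * \<alpha>)))
       \<and> (\<forall>z1 z2 z3 \<alpha> k :: real. 0 < z3 \<and> z3 < z2 \<and> z2 < z1 \<and>
            0 < k \<and> k < 1 \<and> 0 < \<alpha> \<and> \<alpha> < ellipticK k \<and>
            z2 = z1 * jdn k (2 * \<alpha>) \<and> z3 = z1 * jcn k (2 * \<alpha>) \<longrightarrow>
              sqrt (z1\<^sup>2 - z3\<^sup>2) = z1 * jsn k (2 * \<alpha>))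
       \<and> (\<forall>z2 z3 \<alpha> k :: real. 0 < z3 \<and> z3 < z2 \<and> z2 < 1 \<and>
            0 < k \<and> k < 1 \<and> 0 < \<alpha> \<and> \<alpha> < ellipticK k \<and>
            z2 = jdn k (2 * \<alpha>) \<and> z3 = jcn k (2 * \<alpha>) \<longrightarrow>
              (\<forall>x :: real. profile 1 z2 z3 x =
                 (jdn k (2 * \<alpha>) + jcn k (2 * \<alpha>)) *
                 (1 + k\<^sup>2 * (jsn k \<alpha>)\<^sup>2 * (jsn k (jsn k (2 * \<alpha>) * x))\<^sup>2) /
                 (1 - k\<^sup>2 * (jsn k \<alpha>)\<^sup>2 * (jsn k (jsn k (2 * \<alpha>) * x))\<^sup>2) - 1))"
proof (intro conjI allI impI)
  fix z1 z2 z3 :: real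
  assume z: "0 < z3 \<and> z3 < z2 \<and> z2 < z1"
  then have "z2 = z1 * D \<longleftrightarrow> z2 / z1 = D" "z3 = z1 * D \<longleftrightarrow> z3 / z1 = D" for D
    by (auto simp: field_simps)
  moreover have "0 < z3 / z1" "z3 / z1 < z2 / z1" "z2 / z1 < 1"
    using z by (simp_all add: divide_strict_right_mono)
  ultimately show "\<exists>!(\<alpha>, k). 0 < k \<and> k < 1 \<and> 0 < \<alpha> \<and> \<alpha> < ellipticK k \<and>
                 z2 = z1 * jdn k (2 * \<alpha>) \<and> z3 = z1 * jcn k (2 * \<alpha>)"
    using ex1_jdn_jcn_double by simp
next
  fix z1 z2 z3 \<alpha> k :: real
  assume "0 < z3 \<and> z3 < z2 \<and> z2 < z1 \<and> 0 < k \<and> k < 1 \<and> 0 < \<alpha> \<and> \<alpha> < ellipticK k \<and>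
    z2 = z1 * jdn k (2 * \<alpha>) \<and> z3 = z1 * jcn k (2 * \<alpha>)"
  then show "sqrt (z1\<^sup>2 - z3\<^sup>2) = z1 * jsn k (2 * \<alpha>)"
    using sqrt_square_minus_jcn_square[of z1 k "2 * \<alpha>"] by simp
next
  fix z2 z3 \<alpha> k x :: real
  assume "0 < z3 \<and> z3 < z2 \<and> z2 < 1 \<and> 0 < k \<and> k < 1 \<and> 0 < \<alpha> \<and> \<alpha> < ellipticK k \<and>
    z2 = jdn k (2 * \<alpha>) \<and> z3 = jcn k (2 * \<alpha>)"
  then show "profile 1 z2 z3 x =
      (jdn k (2 * \<alpha>) + jcn k (2 * \<alpha>)) *
      (1 + k\<^sup>2 * (jsn k \<alpha>)\<^sup>2 * (jsn k (jsn k (2 * \<alpha>) * x))\<^sup>2) /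
      (1 - k\<^sup>2 * (jsn k \<alpha>)\<^sup>2 * (jsn k (jsn k (2 * \<alpha>) * x))\<^sup>2) - 1"
    using profile_jacobi_form[of k \<alpha> x] by simp
qed

end
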